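(* Let $a$ and $b$ be disjoint finite groups of labeled samples with $n_1^a,n_0^a,n_1^b,n_0^b\ge 1$, and let the within-group orderings $\mathrm{p}^a$ and $\mathrm{p}^b$ be fixed. Then: (i) there exists a cross-group ordering $o$ with $$\Delta\mathrm{xAUC}(o)\le \min\Big(\max\big(\tfrac{1}{n_1^b},\tfrac{1}{n_0^b}\big),\ \max\big(\tfrac{1}{n_1^a},\tfrac{1}{n_0^a}\big)\Big);$$ (ii) there exists a cross-group ordering $o'$ with $$\Delta\mathrm{PRF}(o')\le \min\Big(\max\big(\tfrac{n_0^b}{n_1^a n_0},\tfrac{1}{n_0}\big),\ \max\big(\tfrac{n_0^a}{n_1^b n_0},\tfrac{1}{n_0}\big)\Big).$$
   Context: Setting: two disjoint finite groups $a$, $b$ of samples; each sample $u$ has a label $Y_u\in\{0,1\}$. Let $n^a,n^b$ be the group sizes, $n_1^a,n_0^a$ the numbers of label-1 and label-0 samples in $a$ (similarly $n_1^b,n_0^b$), $n_1=n_1^a+n_1^b$, $n_0=n_0^a+n_0^b$. Fixed within-group rankings are given: $\mathrm{p}^a=(\mathrm{p}^{a(1)},\dots,\mathrm{p}^{a(n^a)})$ lists all samples of $a$, and $\mathrm{p}^b=(\mathrm{p}^{b(1)},\dots,\mathrm{p}^{b(n^b)})$ lists all samples of $b$. A cross-group ordering $o$ is a ranked list (strict total order, top to bottom) of all samples of $a\cup b$ whose restriction to $a$ is $\mathrm{p}^a$ and whose restriction to $b$ is $\mathrm{p}^b$. Write $u\succ_o v$ if $u$ is ranked above $v$ in $o$.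 Define $\mathrm{xAUC}_o(a,b)=\frac{1}{n_1^a n_0^b}\#\{(u,v):u\in a,Y_u=1,v\in b,Y_v=0,u\succ_o v\}$, and $\mathrm{xAUC}_o(b,a)$ symmetrically (positives of $b$ over negatives of $a$, normalized by $n_1^b n_0^a$); $\Delta\mathrm{xAUC}(o)=|\mathrm{xAUC}_o(a,b)-\mathrm{xAUC}_o(b,a)|$. $\mathrm{PRF}_o(a)=\frac{1}{n_1^a n_0}\#\{(u,v):u\in a,Y_u=1,Y_v=0\ (v\in a\cup b),u\succ_o v\}$, $\mathrm{PRF}_o(b)$ symmetrically (normalized by $n_1^b n_0$), and $\Delta\mathrm{PRF}(o)=|\mathrm{PRF}_o(a)-\mathrm{PRF}_o(b)|$. *)

theory Defs
  imports Complex_Main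
begin

(* A ranked list (top to bottom) is a distinct list; u is ranked above v. *)
definition ranked_above :: "'a list \<Rightarrow> 'a \<Rightarrow> 'a \<Rightarrow> bool" where
  "ranked_above ord u v \<longleftrightarrow> (\<exists>i j. i < j \<and> j < length ord \<and> ord ! i = u \<and> ord ! j = v)"

definition cross_ordering :: "'a set \<Rightarrow> 'a set \<Rightarrow> 'a list \<Rightarrow> 'a list \<Rightarrow> 'a list \<Rightarrow> bool" where
  "cross_ordering A B pa pb ord \<longleftrightarrow>
     distinct ord \<and> set ord = A \<union> B \<and> filter (\<lambda>x. x \<in> A) ord = pa \<and> filter (\<lambda>x. x \<in> B) ord = pb"

(* labels: Y u = True means label 1, Y u = False means label 0 *)
definition n1 :: "('a \<Rightarrow> bool) \<Rightarrow> 'a set \<Rightarrow> nat" where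
  "n1 Y A = card {u \<in> A. Y u}"

definition n0 :: "('a \<Rightarrow> bool) \<Rightarrow> 'a set \<Rightarrow> nat" where
  "n0 Y A = card {u \<in> A. \<not> Y u}"

definition xAUC :: "('a \<Rightarrow> bool) \<Rightarrow> 'a list \<Rightarrow> 'a set \<Rightarrow> 'a set \<Rightarrow> real" where
  "xAUC Y ord A B =
     real (card {(u, v). u \<in> A \<and> Y u \<and> v \<in> B \<and> \<not> Y v \<and> ranked_above ord u v})
     / (real (n1 Y A) * real (n0 Y B))"

definition delta_xAUC :: "('a \<Rightarrow> bool) \<Rightarrow> 'a list \<Rightarrow> 'a set \<Rightarrow> 'a set \<Rightarrow> real" where
  "delta_xAUC Y ord A B = \<bar>xAUC Y ord A B - xAUC Y ord B A\<bar>"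

definition PRF :: "('a \<Rightarrow> bool) \<Rightarrow> 'a list \<Rightarrow> 'a set \<Rightarrow> 'a set \<Rightarrow> real" where
  "PRF Y ord A B =
     real (card {(u, v). u \<in> A \<and> Y u \<and> v \<in> A \<union> B \<and> \<not> Y v \<and> ranked_above ord u v})
     / (real (n1 Y A) * real (n0 Y A + n0 Y B))"

definition delta_PRF :: "('a \<Rightarrow> bool) \<Rightarrow> 'a list \<Rightarrow> 'a set \<Rightarrow> 'a set \<Rightarrow> real" where
  "delta_PRF Y ord A B = \<bar>PRF Y ord A B - PRF Y ord B A\<bar>"

end

theory Submission
  imports Defs
begin

text \<open>
  Slide the block \<open>pa\<close> through \<open>pb\<close>: every list \<open>take k pb @ pa @ drop k pb\<close>,
  \<open>k = 0, \<dots>, length pb\<close>, is a cross-group ordering. For \<open>k = 0\<close> group \<open>A\<close> lies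
  entirely above \<open>B\<close>, so the \<open>A\<close>-side metric dominates the \<open>B\<close>-side one; for
  \<open>k = length pb\<close> the opposite holds. Moving the next element \<open>x\<close> of \<open>pb\<close> from just
  below the block to just above it only affects the pairs formed by \<open>x\<close> and members of \<open>A\<close>:
  a positive \<open>x\<close> gains the \<open>n\<^sub>0(A)\<close> negatives of \<open>A\<close>, a negative \<open>x\<close> is no longer
  beaten by the \<open>n\<^sub>1(A)\<close> positives of \<open>A\<close>. Hence the difference of the two metrics
  decreases in steps bounded by the claimed maximum and changes sign, so at some \<open>k\<close> its
  absolute value is below that bound. Exchanging the roles of the two groups gives the
  other argument of the minimum.
\<close>

lemma ranked_above_imp_mem: "ranked_above ord u v \<Longrightarrow> u \<in> set ord \<and> v \<in> set ord"
  unfolding ranked_above_def by auto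

lemma ranked_above_append:
  "ranked_above (xs @ ys) u v \<longleftrightarrow>
     ranked_above xs u v \<or> ranked_above ys u v \<or> (u \<in> set xs \<and> v \<in> set ys)"
proof
  assume "ranked_above (xs @ ys) u v"
  then obtain i j where ij: "i < j" "j < length (xs @ ys)" "(xs @ ys) ! i = u" "(xs @ ys) ! j = v"
    unfolding ranked_above_def by blast
  consider "j < length xs" | "i < length xs" "length xs \<le> j" | "length xs \<le> i"
    using ij(1) by linarith
  then show "ranked_above xs u v \<or> ranked_above ys u v \<or> (u \<in> set xs \<and> v \<in> set ys)"
  proof cases
    case 1
    then have "ranked_above xs u v"
      unfolding ranked_above_def using ij by (metis nth_append_left order.strict_trans)
    then show ?thesis ..
  next
    case 2
    then have "u \<in> set xs" "v \<in> set ys"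
      using ij by (auto simp: nth_append)
    then show ?thesis by blast
  next
    case 3
    then have "ranked_above ys u v"
      unfolding ranked_above_def using ij
      by (intro exI[of _ "i - length xs"] exI[of _ "j - length xs"]) (auto simp: nth_append)
    then show ?thesis by blast
  qed
next
  assume "ranked_above xs u v \<or> ranked_above ys u v \<or> (u \<in> set xs \<and> v \<in> set ys)"
  then show "ranked_above (xs @ ys) u v"
  proof (elim disjE)
    assume "ranked_above xs u v"
    then show ?thesis
      unfolding ranked_above_def
      by (metis length_append nth_append_left trans_less_add1 order.strict_trans)
  next
    assume "ranked_above ys u v"
    then obtain i j where "i < j" "j < length ys" "ys ! i = u" "ys ! j = v"
      unfolding ranked_above_def by blast
    then show ?thesis unfolding ranked_above_def
      by (intro exI[of _ "length xs + i"] exI[of _ "length xs + j"]) (simp add: nth_append)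
  next
    assume "u \<in> set xs \<and> v \<in> set ys"
    then obtain i j where "i < length xs" "xs ! i = u" "j < length ys" "ys ! j = v"
      by (auto simp: in_set_conv_nth)
    then show ?thesis unfolding ranked_above_def
      by (intro exI[of _ i] exI[of _ "length xs + j"]) (simp add: nth_append)
  qed
qed

lemma ranked_above_Cons:
  "ranked_above (x # ys) u v \<longleftrightarrow> (u = x \<and> v \<in> set ys) \<or> ranked_above ys u v"
  using ranked_above_append[of "[x]" ys u v] by (auto simp: ranked_above_def)

lemma ranked_above_move_before_block:
  assumes "distinct (T @ P @ x # R)"
  shows "ranked_above (T @ x # P @ R) u v \<longleftrightarrow>
    (ranked_above (T @ P @ x # R) u v \<and> \<not> (u \<in> set P \<and> v = x)) \<or> (u = x \<and> v \<in> set P)"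
  using assms ranked_above_imp_mem[of T u v] ranked_above_imp_mem[of P u v]
    ranked_above_imp_mem[of R u v]
  unfolding ranked_above_append ranked_above_Cons by auto

lemma ranked_above_asym:
  assumes "distinct ord" "ranked_above ord u v"
  shows "\<not> ranked_above ord v u"
proof
  assume "ranked_above ord v u"
  with assms(2) obtain i j i' j' where "i < j" "j < length ord" "ord ! i = u" "ord ! j = v"
    and "i' < j'" "j' < length ord" "ord ! i' = v" "ord ! j' = u"
    unfolding ranked_above_def by blast
  with assms(1) have "i = j'" "j = i'"
    by (metis nth_eq_iff_index_eq order.strict_trans)+
  with \<open>i < j\<close> \<open>i' < j'\<close> show False by simp
qed

definition insert_block :: "'a list \<Rightarrow> 'a list \<Rightarrow> nat \<Rightarrow> 'a list" where
  "insert_block P L k = take k L @ P @ drop k L"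

lemma distinct_insert_block:
  assumes "distinct (P @ L)"
  shows "distinct (insert_block P L k)"
  using assms set_take_disj_set_drop_if_distinct[of L k k]
  unfolding insert_block_def by (auto dest: in_set_takeD in_set_dropD)

lemma cross_ordering_insert_block:
  assumes "distinct (pa @ pb)" "set pa = A" "set pb = B"
  shows "cross_ordering A B pa pb (insert_block pa pb k)"
proof -
  let ?front = "take k pb" and ?back = "drop k pb"
  have pb: "pb = ?front @ ?back" by simp
  have "distinct (?front @ pa @ ?back)"
    using distinct_insert_block[OF assms(1)] unfolding insert_block_def .
  moreover have "set (?front @ pa @ ?back) = A \<union> B"
    using assms(2,3) pb by (metis Un_commute Un_left_commute set_append)
  moreover have "set ?front \<inter> A = {}" "set ?back \<inter> A = {}"
    using assms(1,2) by (auto dest: in_set_takeD in_set_dropD)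
  then have "filter (\<lambda>x. x \<in> A) (?front @ pa @ ?back) = pa"
    using assms(2) by (auto simp: filter_False filter_id_conv disjoint_iff)
  moreover have "filter (\<lambda>x. x \<in> B) (?front @ pa @ ?back) = pb"
  proof -
    have "filter (\<lambda>x. x \<in> B) ?front = ?front" "filter (\<lambda>x. x \<in> B) ?back = ?back"
      using assms(3) by (auto simp: filter_id_conv dest: in_set_takeD in_set_dropD)
    moreover have "filter (\<lambda>x. x \<in> B) pa = []"
      using assms by (auto simp: filter_empty_conv)
    ultimately show ?thesis by simp
  qed
  ultimately show ?thesis
    unfolding cross_ordering_def insert_block_def by blast
qed

lemma ranked_above_insert_block_Suc:
  assumes "distinct (P @ L)" "k < length L"
  shows "ranked_above (insert_block P L (Suc k)) u v \<longleftrightarrow>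
    (ranked_above (insert_block P L k) u v \<and> \<not> (u \<in> set P \<and> v = L ! k)) \<or>
    (u = L ! k \<and> v \<in> set P)"
proof -
  have L: "L = take k L @ L ! k # drop (Suc k) L"
    using assms(2) by (simp add: id_take_nth_drop)
  have Suc_k: "insert_block P L (Suc k) = take k L @ L ! k # P @ drop (Suc k) L"
    using assms(2) by (simp add: insert_block_def take_Suc_conv_app_nth)
  have k: "insert_block P L k = take k L @ P @ L ! k # drop (Suc k) L"
    using assms(2) by (simp add: insert_block_def Cons_nth_drop_Suc)
  have distinct_k: "distinct (take k L @ P @ L ! k # drop (Suc k) L)"
  proof -
    have "distinct (P @ take k L @ L ! k # drop (Suc k) L)"
      using assms(1) L by metis
    then show ?thesis by auto
  qed
  show ?thesis
    unfolding Suc_k k by (rule ranked_above_move_before_block[OF distinct_k])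
qed

lemma ranked_above_insert_block_before:
  assumes "u \<in> set P" "k < length L"
  shows "ranked_above (insert_block P L k) u (L ! k)"
proof -
  have "L ! k \<in> set (drop k L)"
    using assms(2) by (simp add: Cons_nth_drop_Suc[symmetric])
  then show ?thesis
    using assms(1) unfolding insert_block_def ranked_above_append by simp
qed

definition ranked_pairs ::
    "('a \<Rightarrow> bool) \<Rightarrow> 'a list \<Rightarrow> 'a set \<Rightarrow> 'a set \<Rightarrow> ('a \<times> 'a) set" where
  "ranked_pairs Y ord S T = {(u, v). u \<in> S \<and> Y u \<and> v \<in> T \<and> \<not> Y v \<and> ranked_above ord u v}"

lemma finite_ranked_pairs: "finite (ranked_pairs Y ord S T)"
  by (rule finite_subset[of _ "set ord \<times> set ord"])
    (auto simp: ranked_pairs_def dest: ranked_above_imp_mem)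

lemma xAUC_eq_card_ranked_pairs:
  "xAUC Y ord A B = card (ranked_pairs Y ord A B) / (real (n1 Y A) * real (n0 Y B))"
  unfolding xAUC_def ranked_pairs_def ..

lemma PRF_eq_card_ranked_pairs:
  "PRF Y ord A B =
     card (ranked_pairs Y ord A (A \<union> B)) / (real (n1 Y A) * real (n0 Y A + n0 Y B))"
  unfolding PRF_def ranked_pairs_def ..

lemma card_ranked_pairs_insert_block_from_block:
  assumes "distinct (P @ L)" "k < length L"
  shows "card (ranked_pairs Y (insert_block P L k) (set P) T) =
    card (ranked_pairs Y (insert_block P L (Suc k)) (set P) T) +
    (if L ! k \<in> T \<and> \<not> Y (L ! k) then n1 Y (set P) else 0)"
proof -
  let ?x = "L ! k" and ?R = "ranked_pairs Y (insert_block P L k) (set P) T"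
  have "?x \<notin> set P"
    using assms by (auto dest: nth_mem)
  then have "ranked_pairs Y (insert_block P L (Suc k)) (set P) T = ?R - set P \<times> {?x}"
    using ranked_above_insert_block_Suc[OF assms] unfolding ranked_pairs_def by auto
  moreover have "?R \<inter> set P \<times> {?x} =
      (if ?x \<in> T \<and> \<not> Y ?x then {u \<in> set P. Y u} \<times> {?x} else {})"
    using ranked_above_insert_block_before[OF _ assms(2)] unfolding ranked_pairs_def by auto
  ultimately show ?thesis
    using card_Int_Diff[OF finite_ranked_pairs, of Y "insert_block P L k" "set P" T "set P \<times> {?x}"]
    by (simp add: n1_def card_cartesian_product)
qed

lemma card_ranked_pairs_insert_block_from_rest:
  assumes "distinct (P @ L)" "k < length L" "set P \<subseteq> T"
  shows "card (ranked_pairs Y (insert_block P L (Suc k)) (set L) T) =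
    card (ranked_pairs Y (insert_block P L k) (set L) T) +
    (if Y (L ! k) then n0 Y (set P) else 0)"
proof -
  let ?x = "L ! k" and ?R' = "ranked_pairs Y (insert_block P L (Suc k)) (set L) T"
  have "\<not> ranked_above (insert_block P L k) ?x v" if "v \<in> set P" for v
    using ranked_above_asym[OF distinct_insert_block[OF assms(1)]]
      ranked_above_insert_block_before[OF that assms(2)] by blast
  then have "ranked_pairs Y (insert_block P L k) (set L) T = ?R' - {?x} \<times> set P"
    using ranked_above_insert_block_Suc[OF assms(1,2)] assms(1)
    unfolding ranked_pairs_def by auto
  moreover have "?R' \<inter> {?x} \<times> set P =
      (if Y ?x then {?x} \<times> {v \<in> set P. \<not> Y v} else {})"
    using ranked_above_insert_block_Suc[OF assms(1,2)] assms nth_mem[OF assms(2)]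
    unfolding ranked_pairs_def by auto
  ultimately show ?thesis
    using card_Int_Diff[OF finite_ranked_pairs, of Y "insert_block P L (Suc k)" "set L" T "{?x} \<times> set P"]
    by (simp add: n0_def card_cartesian_product)
qed

lemma ranked_pairs_append_subset:
  assumes "distinct (xs @ ys)" "S \<subseteq> set ys"
  shows "ranked_pairs Y (xs @ ys) S T \<subseteq> {u \<in> S. Y u} \<times> {v \<in> T \<inter> set ys. \<not> Y v}"
  using assms unfolding ranked_pairs_def ranked_above_append
  by (auto dest: ranked_above_imp_mem)

lemma ranked_pairs_append_supset:
  assumes "S \<subseteq> set xs"
  shows "{u \<in> S. Y u} \<times> {v \<in> T \<inter> set ys. \<not> Y v} \<subseteq> ranked_pairs Y (xs @ ys) S T"
  using assms unfolding ranked_pairs_def ranked_above_append by auto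

lemma exists_abs_le_of_sign_change:
  fixes f :: "nat \<Rightarrow> real"
  assumes "0 \<le> f 0" "f N \<le> 0" "\<And>k. k < N \<Longrightarrow> \<bar>f k - f (Suc k)\<bar> \<le> d" "0 \<le> d"
  shows "\<exists>k\<le>N. \<bar>f k\<bar> \<le> d"
  using assms(2,3)
proof (induction N)
  case 0
  then show ?case using assms(1,4) by auto
next
  case (Suc N)
  show ?case
  proof (cases "f N \<le> 0")
    case True
    then show ?thesis using Suc by (metis le_SucI less_SucI)
  next
    case False
    then have "\<bar>f (Suc N)\<bar> \<le> d" using Suc.prems by force
    then show ?thesis by blast
  qed
qed

lemma exists_balanced_insert_block:
  fixes Y :: "'a \<Rightarrow> bool" and \<alpha> \<beta> :: real
  assumes "distinct (P @ L)" "set L \<subseteq> T" "set P \<subseteq> T'" "0 < \<alpha>" "0 < \<beta>"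
  defines "D \<equiv> \<lambda>k. card (ranked_pairs Y (insert_block P L k) (set P) T) / \<alpha>
                  - card (ranked_pairs Y (insert_block P L k) (set L) T') / \<beta>"
  assumes "0 \<le> D 0" "D (length L) \<le> 0"
  shows "\<exists>k\<le>length L. \<bar>D k\<bar> \<le> max (n0 Y (set P) / \<beta>) (n1 Y (set P) / \<alpha>)"
proof (rule exists_abs_le_of_sign_change)
  fix k
  assume k: "k < length L"
  then have "L ! k \<in> T"
    using assms(2) by auto
  then have "D k - D (Suc k) = (if Y (L ! k) then n0 Y (set P) / \<beta> else n1 Y (set P) / \<alpha>)"
    unfolding D_def
    using card_ranked_pairs_insert_block_from_block[OF assms(1) k, of Y T]
      card_ranked_pairs_insert_block_from_rest[OF assms(1) k assms(3), of Y]
    by (simp add: add_divide_distrib)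
  then show "\<bar>D k - D (Suc k)\<bar> \<le> max (n0 Y (set P) / \<beta>) (n1 Y (set P) / \<alpha>)"
    using assms(4,5) by auto
qed (use assms(4-) in \<open>auto simp: le_max_iff_disj\<close>)

lemma xAUC_append_eq_0:
  assumes "distinct (xs @ ys)" "set xs = A" "set ys = B"
  shows "xAUC Y (xs @ ys) B A = 0"
proof -
  have "ranked_pairs Y (xs @ ys) B A = {}"
    using ranked_pairs_append_subset[OF assms(1), of B Y A] assms by auto
  then show ?thesis
    unfolding xAUC_eq_card_ranked_pairs by simp
qed

lemma divide_mult_le_divide_mult_of_bounds:
  fixes a b c d m t :: real
  assumes "d \<le> b * m" "a * m \<le> c" "0 < a" "0 < b" "0 < t"
  shows "d / (b * t) \<le> c / (a * t)"
proof -
  have "d / (b * t) \<le> (b * m) / (b * t)"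
    using assms by (intro divide_right_mono) auto
  also have "\<dots> = (a * m) / (a * t)"
    using assms by simp
  also have "\<dots> \<le> c / (a * t)"
    using assms by (intro divide_right_mono) auto
  finally show ?thesis .
qed

lemma PRF_append_le:
  assumes "distinct (xs @ ys)" "set xs = A" "set ys = B"
    and "0 < n1 Y A" "0 < n1 Y B" "0 < n0 Y A + n0 Y B"
  shows "PRF Y (xs @ ys) B A \<le> PRF Y (xs @ ys) A B"
proof -
  have card_product: "card ({u \<in> S. Y u} \<times> {v \<in> T. \<not> Y v}) = n1 Y S * n0 Y T" for S T
    unfolding n1_def n0_def by (rule card_cartesian_product)
  let ?cA = "card (ranked_pairs Y (xs @ ys) A (A \<union> B))"
  let ?cB = "card (ranked_pairs Y (xs @ ys) B (B \<union> A))"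
  let ?t = "real (n0 Y A + n0 Y B)"
  have "?cB \<le> n1 Y B * n0 Y B"
    using card_mono[OF _ ranked_pairs_append_subset[OF assms(1), of B Y "B \<union> A"]]
      assms(2,3) card_product by (auto simp: Int_absorb1)
  moreover have "n1 Y A * n0 Y B \<le> ?cA"
    using card_mono[OF finite_ranked_pairs ranked_pairs_append_supset[of A xs Y "A \<union> B" ys]]
      assms(2,3) card_product by (auto simp: Int_absorb2)
  ultimately have "?cB / (real (n1 Y B) * ?t) \<le> ?cA / (real (n1 Y A) * ?t)"
    using assms(4-6)
    by (intro divide_mult_le_divide_mult_of_bounds[where m = "real (n0 Y B)"])
      (auto simp flip: of_nat_mult)
  then show ?thesis
    unfolding PRF_eq_card_ranked_pairs by (simp add: add.commute)
qed

lemma exists_cross_ordering_delta_xAUC_le: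
  assumes "A \<inter> B = {}" "distinct pa" "set pa = A" "distinct pb" "set pb = B"
    and "1 \<le> n1 Y A" "1 \<le> n0 Y A" "1 \<le> n1 Y B" "1 \<le> n0 Y B"
  shows "\<exists>ord. cross_ordering A B pa pb ord \<and>
           delta_xAUC Y ord A B \<le> max (1 / real (n1 Y B)) (1 / real (n0 Y B))"
proof -
  let ?\<alpha> = "real (n1 Y A) * real (n0 Y B)" and ?\<beta> = "real (n1 Y B) * real (n0 Y A)"
  let ?D = "\<lambda>k. xAUC Y (insert_block pa pb k) A B - xAUC Y (insert_block pa pb k) B A"
  have distinct_pa_pb: "distinct (pa @ pb)" and distinct_pb_pa: "distinct (pb @ pa)"
    using assms(1-5) by auto
  have "0 \<le> xAUC Y ord S T" for ord S T
    unfolding xAUC_def by simp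
  then have "0 \<le> ?D 0" "?D (length pb) \<le> 0"
    using xAUC_append_eq_0[OF distinct_pa_pb assms(3,5), where Y = Y]
      xAUC_append_eq_0[OF distinct_pb_pa assms(5,3), where Y = Y]
    by (simp_all add: insert_block_def)
  then obtain k where "k \<le> length pb"
      "\<bar>?D k\<bar> \<le> max (real (n0 Y A) / ?\<beta>) (real (n1 Y A) / ?\<alpha>)"
    using exists_balanced_insert_block[OF distinct_pa_pb, of B A ?\<alpha> ?\<beta> Y, unfolded assms(3,5)]
      assms(6-9)
    unfolding xAUC_eq_card_ranked_pairs by auto
  moreover have "max (real (n0 Y A) / ?\<beta>) (real (n1 Y A) / ?\<alpha>) =
      max (1 / real (n1 Y B)) (1 / real (n0 Y B))"
    using assms(6-9) by simp
  ultimately have "delta_xAUC Y (insert_block pa pb k) A B \<le>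
      max (1 / real (n1 Y B)) (1 / real (n0 Y B))"
    unfolding delta_xAUC_def by simp
  then show ?thesis
    using cross_ordering_insert_block[OF distinct_pa_pb assms(3,5)] by blast
qed

lemma exists_cross_ordering_delta_PRF_le:
  assumes "A \<inter> B = {}" "distinct pa" "set pa = A" "distinct pb" "set pb = B"
    and "1 \<le> n1 Y A" "1 \<le> n0 Y A" "1 \<le> n1 Y B" "1 \<le> n0 Y B"
  shows "\<exists>ord. cross_ordering A B pa pb ord \<and>
           delta_PRF Y ord A B \<le> max (real (n0 Y A) / (real (n1 Y B) * real (n0 Y A + n0 Y B)))
                                       (1 / real (n0 Y A + n0 Y B))"
proof -
  let ?t = "real (n0 Y A + n0 Y B)"
  let ?\<alpha> = "real (n1 Y A) * ?t" and ?\<beta> = "real (n1 Y B) * ?t"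
  let ?D = "\<lambda>k. PRF Y (insert_block pa pb k) A B - PRF Y (insert_block pa pb k) B A"
  have distinct_pa_pb: "distinct (pa @ pb)" and distinct_pb_pa: "distinct (pb @ pa)"
    using assms(1-5) by auto
  have "0 \<le> ?D 0" "?D (length pb) \<le> 0"
    using PRF_append_le[OF distinct_pa_pb assms(3,5), where Y = Y]
      PRF_append_le[OF distinct_pb_pa assms(5,3), where Y = Y] assms(6-9) by (simp_all add: insert_block_def add.commute)
  then obtain k where "k \<le> length pb"
      "\<bar>?D k\<bar> \<le> max (real (n0 Y A) / ?\<beta>) (real (n1 Y A) / ?\<alpha>)"
    using exists_balanced_insert_block[OF distinct_pa_pb, of "A \<union> B" "A \<union> B" ?\<alpha> ?\<beta> Y,
        unfolded assms(3,5)] assms(6-9)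
    unfolding PRF_eq_card_ranked_pairs by (auto simp: Un_commute add.commute)
  moreover have "real (n1 Y A) / ?\<alpha> = 1 / ?t"
    using assms(6) by simp
  ultimately have "delta_PRF Y (insert_block pa pb k) A B \<le>
      max (real (n0 Y A) / ?\<beta>) (1 / ?t)"
    unfolding delta_PRF_def by simp
  then show ?thesis
    using cross_ordering_insert_block[OF distinct_pa_pb assms(3,5)] by blast
qed

lemma cross_ordering_swap: "cross_ordering B A pb pa ord \<longleftrightarrow> cross_ordering A B pa pb ord"
  unfolding cross_ordering_def Un_commute[of B A] by blast

lemma delta_xAUC_swap: "delta_xAUC Y ord B A = delta_xAUC Y ord A B"
  unfolding delta_xAUC_def by (rule abs_minus_commute)

lemma delta_PRF_swap: "delta_PRF Y ord B A = delta_PRF Y ord A B"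
  unfolding delta_PRF_def by (rule abs_minus_commute)

lemma ex_le_min_if_ex_le:
  fixes f :: "'a \<Rightarrow> real"
  assumes "\<exists>x. P x \<and> f x \<le> a" "\<exists>x. P x \<and> f x \<le> b"
  shows "\<exists>x. P x \<and> f x \<le> min a b"
  using assms by (cases "a \<le> b") (auto simp: min_def)

theorem proposition1:
  fixes A B :: "'a set" and Y :: "'a \<Rightarrow> bool" and pa pb :: "'a list"
  assumes "finite A" and "finite B" and "A \<inter> B = {}"
    and "distinct pa" and "set pa = A" and "distinct pb" and "set pb = B"
    and "n1 Y A \<ge> 1" and "n0 Y A \<ge> 1" and "n1 Y B \<ge> 1" and "n0 Y B \<ge> 1"
  shows "(\<exists>ord. cross_ordering A B pa pb ord \<and>
            delta_xAUC Y ord A B \<le>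
              min (max (1 / real (n1 Y B)) (1 / real (n0 Y B)))
                  (max (1 / real (n1 Y A)) (1 / real (n0 Y A))))
       \<and> (\<exists>ord'. cross_ordering A B pa pb ord' \<and>
            delta_PRF Y ord' A B \<le>
              min (max (real (n0 Y B) / (real (n1 Y A) * real (n0 Y A + n0 Y B)))
                       (1 / real (n0 Y A + n0 Y B)))
                  (max (real (n0 Y A) / (real (n1 Y B) * real (n0 Y A + n0 Y B)))
                       (1 / real (n0 Y A + n0 Y B))))"
proof -
  have "B \<inter> A = {}"
    using assms(3) by blast
  note swapped = this assms(6,7,4,5,10,11,8,9)
  note xAUC_AB = exists_cross_ordering_delta_xAUC_le[OF assms(3-11)]
  note xAUC_BA = exists_cross_ordering_delta_xAUC_le[OF swapped,
      unfolded cross_ordering_swap[of B A pb pa] delta_xAUC_swap[of Y _ B A]]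
  note PRF_AB = exists_cross_ordering_delta_PRF_le[OF assms(3-11)]
  note PRF_BA = exists_cross_ordering_delta_PRF_le[OF swapped,
      unfolded cross_ordering_swap[of B A pb pa] delta_PRF_swap[of Y _ B A]
        add.commute[of "n0 Y B"]]
  show ?thesis
    using ex_le_min_if_ex_le[OF xAUC_AB xAUC_BA] ex_le_min_if_ex_le[OF PRF_BA PRF_AB] by (rule conjI)
qed

end
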